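(* Let $\Sigma$ be an infinite alphabet and $k\ge1$. Every RCP function $f\colon(\Sigma^* )^k\to\Sigma^*$ is of the form $$f(x_1,\ldots,x_k)=w_0\,x_{i_1}^{p_1}\,w_1\,x_{i_2}^{p_2}\,w_2\cdots x_{i_n}^{p_n}\,w_n\quad\text{for all }x_1,\ldots,x_k\in\Sigma^*,$$ for some $n\in\mathbb{N}$, words $w_0,\ldots,w_n\in\Sigma^*$, exponents $p_1,\ldots,p_n\in\mathbb{N}$ and indices $i_1,\ldots,i_n\in\{1,\ldots,k\}$.
   Context: $\Sigma^*$ is the free monoid over $\Sigma$ (finite words, concatenation, empty word $\varepsilon$); $x^p$ denotes the concatenation of $p$ copies of $x$. A function $f\colon(\Sigma^* )^k\to\Sigma^*$ is RCP if for every monoid morphism $\varphi\colon\Sigma^*\to\Sigma^*$ and all $u_1,\ldots,u_k,v_1,\ldots,v_k$ with $\varphi(u_i)=\varphi(v_i)$ for all $i$, we have $\varphi(f(u_1,\ldots,u_k))=\varphi(f(v_1,\ldots,v_k))$. *)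

theory Defs
  imports Main
begin

(* Words over the alphabet 'a are lists; a k-tuple of words is a list of length k. *)

definition monoid_morphism :: "('a list \<Rightarrow> 'b list) \<Rightarrow> bool" where
  "monoid_morphism \<phi> \<longleftrightarrow> \<phi> [] = [] \<and> (\<forall>u v. \<phi> (u @ v) = \<phi> u @ \<phi> v)"

definition RCP :: "nat \<Rightarrow> ('a list list \<Rightarrow> 'a list) \<Rightarrow> bool" where
  "RCP k f \<longleftrightarrow>
     (\<forall>\<phi> :: 'a list \<Rightarrow> 'a list. monoid_morphism \<phi> \<longrightarrow>
       (\<forall>us vs. length us = k \<longrightarrow> length vs = k \<longrightarrow>
          (\<forall>i<k. \<phi> (us ! i) = \<phi> (vs ! i)) \<longrightarrow> \<phi> (f us) = \<phi> (f vs)))"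

definition wpow :: "'a list \<Rightarrow> nat \<Rightarrow> 'a list" where
  "wpow x p = concat (replicate p x)"

end

theory Submission
  imports Defs
begin

text \<open>Every letter of \<open>f xs\<close> either occurs in the constant word \<open>f (\<epsilon>,\<dots>,\<epsilon>)\<close> or in some
argument (erase all other letters). Feed \<open>f\<close> the single letters \<open>c\<^sub>1,\<dots>,c\<^sub>k\<close> of a
variable alphabet avoiding the constant letters; the result is a template \<open>t\<close>.
Substituting \<open>x\<^sub>i\<close> for \<open>c\<^sub>i\<close> in \<open>t\<close> yields \<open>f xs\<close>: a substitution sending letters
\<open>d\<^sub>i\<close> that are fresh for \<open>xs\<close> to \<open>x\<^sub>i\<close> fixes \<open>xs\<close> and \<open>f xs\<close>, so by RCP it maps
\<open>f (d\<^sub>1,\<dots>,d\<^sub>k)\<close> to \<open>f xs\<close>, and the renaming \<open>c\<^sub>i \<mapsto> d\<^sub>i\<close> maps \<open>t\<close> to \<open>f (d\<^sub>1,\<dots>,d\<^sub>k)\<close>.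
Reading \<open>t\<close> letter by letter gives the normal form, with exponents \<open>0\<close> and \<open>1\<close>.\<close>

definition instantiate :: "'a list \<Rightarrow> 'a list list \<Rightarrow> 'a \<Rightarrow> 'a list" where
  "instantiate cs xs a = (case map_of (zip cs xs) a of None \<Rightarrow> [a] | Some x \<Rightarrow> x)"

lemma instantiate_nth:
  "\<lbrakk>distinct cs; length cs = length xs; m < length xs\<rbrakk> \<Longrightarrow> instantiate cs xs (cs ! m) = xs ! m"
  by (simp add: instantiate_def map_of_zip_nth)

lemma instantiate_notin:
  assumes "a \<notin> set cs" "length cs = length xs"
  shows "instantiate cs xs a = [a]"
proof -
  have "map_of (zip cs xs) a = None" using assms by simp
  then show ?thesis by (simp add: instantiate_def)
qed

lemma concat_map_instantiate_disjoint:
  "\<lbrakk>set w \<inter> set cs = {}; length cs = length xs\<rbrakk> \<Longrightarrow> concat (map (instantiate cs xs) w) = w"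
  by (induct w) (auto simp: instantiate_notin)

lemma concat_map_instantiate_rename:
  assumes "distinct cs" "distinct ds" "length cs = length ds" "length ds = length xs"
    and "a \<notin> set ds"
  shows "concat (map (instantiate ds xs) (instantiate cs (map (\<lambda>d. [d]) ds) a)) = instantiate cs xs a"
proof (cases "a \<in> set cs")
  case True
  then obtain m where "m < length cs" "a = cs ! m" by (metis in_set_conv_nth)
  then show ?thesis using assms by (simp add: instantiate_nth)
next
  case False
  then show ?thesis using assms by (simp add: instantiate_notin)
qed

lemma obtain_fresh_distinct_list:
  assumes "infinite (UNIV :: 'a set)" "finite (F :: 'a set)"
  obtains cs where "length cs = k" "distinct cs" "set cs \<inter> F = {}"
proof -
  have "infinite (UNIV - F)" using assms by simp
  then obtain B where "B \<subseteq> UNIV - F" "finite B" "card B = k"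
    using infinite_arbitrarily_large by blast
  moreover obtain cs where "set cs = B" "distinct cs"
    using \<open>finite B\<close> finite_distinct_list by blast
  ultimately show thesis using that distinct_card by fastforce
qed

lemma monoid_morphism_concat_map: "monoid_morphism (\<lambda>w. concat (map h w))"
  by (simp add: monoid_morphism_def)

lemma RCP_concat_map:
  fixes f :: "'a list list \<Rightarrow> 'a list" and h :: "'a \<Rightarrow> 'a list"
  assumes "RCP k f" "length us = k" "length vs = k"
    and "\<forall>i<k. concat (map h (us ! i)) = concat (map h (vs ! i))"
  shows "concat (map h (f us)) = concat (map h (f vs))"
  using assms monoid_morphism_concat_map[of h] unfolding RCP_def by blast

lemma RCP_letters:
  assumes "RCP k f" "length xs = k"
  shows "set (f xs) \<subseteq> set (f (replicate k [])) \<union> (\<Union>x\<in>set xs. set x)"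
proof
  fix b assume b: "b \<in> set (f xs)"
  show "b \<in> set (f (replicate k [])) \<union> (\<Union>x\<in>set xs. set x)"
  proof (rule ccontr)
    assume b_new: "b \<notin> set (f (replicate k [])) \<union> (\<Union>x\<in>set xs. set x)"
    define erase where "erase = (\<lambda>a. if a = b then [b] else ([] :: 'a list))"
    have erase_Nil: "concat (map erase w) = [] \<longleftrightarrow> b \<notin> set w" for w
      by (auto simp: erase_def concat_eq_Nil_conv)
    have "\<forall>i<k. concat (map erase (xs ! i)) = concat (map erase (replicate k [] ! i))"
      using b_new assms(2) nth_mem by (fastforce simp: erase_def concat_eq_Nil_conv)
    then have "concat (map erase (f xs)) = concat (map erase (f (replicate k [])))"
      using assms by (intro RCP_concat_map) auto
    with b b_new show False by (metis UnCI erase_Nil)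
  qed
qed

lemma RCP_instantiate_fresh:
  assumes "RCP k f" "length xs = k" "length ds = k" "distinct ds"
    and "set ds \<inter> set (f (replicate k [])) = {}" "set ds \<inter> (\<Union>x\<in>set xs. set x) = {}"
  shows "f xs = concat (map (instantiate ds xs) (f (map (\<lambda>d. [d]) ds)))"
proof -
  let ?h = "instantiate ds xs"
  have "\<forall>i<k. concat (map ?h (map (\<lambda>d. [d]) ds ! i)) = concat (map ?h (xs ! i))"
  proof (intro allI impI)
    fix i assume "i < k"
    then have "set (xs ! i) \<inter> set ds = {}" using assms(2,6) nth_mem by blast
    then show "concat (map ?h (map (\<lambda>d. [d]) ds ! i)) = concat (map ?h (xs ! i))"
      using \<open>i < k\<close> assms(2-4) by (simp add: instantiate_nth concat_map_instantiate_disjoint)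
  qed
  then have "concat (map ?h (f (map (\<lambda>d. [d]) ds))) = concat (map ?h (f xs))"
    using assms(1-3) by (intro RCP_concat_map) auto
  also have "\<dots> = f xs"
    using RCP_letters[OF assms(1,2)] assms(2,3,5,6) by (intro concat_map_instantiate_disjoint) auto
  finally show ?thesis by simp
qed

lemma RCP_template:
  fixes f :: "'a list list \<Rightarrow> 'a list"
  assumes "infinite (UNIV :: 'a set)" "RCP k f" "length xs = k"
    and "length cs = k" "distinct cs" "set cs \<inter> set (f (replicate k [])) = {}"
  shows "f xs = concat (map (instantiate cs xs) (f (map (\<lambda>c. [c]) cs)))"
proof -
  define C where "C = set (f (replicate k []))"
  define t where "t = f (map (\<lambda>c. [c]) cs)"
  have "finite (C \<union> set cs \<union> (\<Union>x\<in>set xs. set x))" by (simp add: C_def)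
  then obtain ds where ds: "length ds = k" "distinct ds"
    "set ds \<inter> (C \<union> set cs \<union> (\<Union>x\<in>set xs. set x)) = {}"
    by (rule obtain_fresh_distinct_list[OF assms(1)])
  define sd where "sd = map (\<lambda>d. [d]) ds"
  have via_ds: "f xs = concat (map (instantiate ds xs) (f sd))"
    unfolding sd_def
    by (rule RCP_instantiate_fresh[OF assms(2,3) ds(1,2)]) (use ds(3) in \<open>auto simp: C_def\<close>)
  have ds_via_cs: "f sd = concat (map (instantiate cs sd) t)"
    unfolding t_def
    by (rule RCP_instantiate_fresh[OF assms(2) _ assms(4-6)]) (use ds in \<open>auto simp: sd_def\<close>)
  have "set t \<inter> set ds = {}"
    using RCP_letters[OF assms(2), of "map (\<lambda>c. [c]) cs"] assms(4) ds(3)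
    by (auto simp: t_def C_def)
  then have rename: "concat (map (\<lambda>a. concat (map (instantiate ds xs) (instantiate cs sd a))) t)
      = concat (map (instantiate cs xs) t)"
    using assms(3-5) ds(1,2) unfolding sd_def
    by (intro arg_cong[where f = concat] map_cong refl concat_map_instantiate_rename) auto
  have "f xs = concat (map (\<lambda>a. concat (map (instantiate ds xs) (instantiate cs sd a))) t)"
    unfolding via_ds ds_via_cs by (induct t) auto
  with rename show ?thesis by (simp add: t_def)
qed

lemma concat_map_instantiate_normal_form:
  assumes "distinct cs" "length cs = k" "k \<ge> 1"
  shows "\<exists>(n::nat) (w :: nat \<Rightarrow> 'a list) (p :: nat \<Rightarrow> nat) (i :: nat \<Rightarrow> nat).
           (\<forall>j\<in>{1..n}. i j \<in> {1..k}) \<and>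
           (\<forall>xs. length xs = k \<longrightarrow>
              concat (map (instantiate cs xs) t)
                = w 0 @ concat (map (\<lambda>j. wpow (xs ! (i j - 1)) (p j) @ w j) [1..<n+1]))"
proof -
  have "\<forall>c\<in>set cs. \<exists>m. m < k \<and> cs ! m = c"
    using assms(2) by (auto simp: in_set_conv_nth)
  then obtain idx where idx: "\<And>c. c \<in> set cs \<Longrightarrow> idx c < k \<and> cs ! idx c = c"
    using bchoice by metis
  define a where "a j = t ! (j - 1)" for j
  define w where "w j = (if j = 0 \<or> a j \<in> set cs then [] else [a j])" for j
  define p where "p j = (if a j \<in> set cs then 1 else 0 :: nat)" for j
  define i where "i j = (if a j \<in> set cs then idx (a j) + 1 else 1)" for j
  have "i j \<in> {1..k}" for j
    using idx[of "a j"] assms(3) by (auto simp: i_def)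
  moreover have "concat (map (instantiate cs xs) t)
      = w 0 @ concat (map (\<lambda>j. wpow (xs ! (i j - 1)) (p j) @ w j) [1..<length t + 1])"
    if xs: "length xs = k" for xs
  proof -
    have letter: "wpow (xs ! (i j - 1)) (p j) @ w j = instantiate cs xs (a j)" if "j \<noteq> 0" for j
    proof (cases "a j \<in> set cs")
      case True
      then have "instantiate cs xs (a j) = xs ! idx (a j)"
        using idx[OF True] instantiate_nth[OF assms(1), of xs "idx (a j)"] xs assms(2) by simp
      then show ?thesis using True by (simp add: wpow_def w_def p_def i_def)
    next
      case False
      then show ?thesis
        using xs assms(2) \<open>j \<noteq> 0\<close> by (simp add: wpow_def w_def p_def i_def instantiate_notin)
    qed
    have "[1..<length t + 1] = map Suc [0..<length t]" by (simp add: map_Suc_upt)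
    then have "map a [1..<length t + 1] = t" by (simp only:) (simp add: a_def comp_def map_nth)
    moreover have "map (\<lambda>j. wpow (xs ! (i j - 1)) (p j) @ w j) [1..<length t + 1]
        = map (instantiate cs xs \<circ> a) [1..<length t + 1]"
    proof (rule map_cong[OF refl])
      fix j assume "j \<in> set [1..<length t + 1]"
      then have "j \<noteq> 0" by auto
      then show "wpow (xs ! (i j - 1)) (p j) @ w j = (instantiate cs xs \<circ> a) j"
        using letter by simp
    qed
    ultimately have "map (instantiate cs xs) t
        = map (\<lambda>j. wpow (xs ! (i j - 1)) (p j) @ w j) [1..<length t + 1]"
      by (metis map_map)
    then show ?thesis by (simp add: w_def)
  qed
  ultimately show ?thesis by blast
qed

theorem mainTheorem20:
  fixes f :: "'a list list \<Rightarrow> 'a list" and k :: nat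
  assumes "infinite (UNIV :: 'a set)"
    and "k \<ge> 1"
    and "RCP k f"
  shows "\<exists>(n::nat) (w :: nat \<Rightarrow> 'a list) (p :: nat \<Rightarrow> nat) (i :: nat \<Rightarrow> nat).
           (\<forall>j\<in>{1..n}. i j \<in> {1..k}) \<and>
           (\<forall>xs. length xs = k \<longrightarrow>
              f xs = w 0 @ concat (map (\<lambda>j. wpow (xs ! (i j - 1)) (p j) @ w j) [1..<n+1]))"
proof -
  obtain cs :: "'a list" where cs: "length cs = k" "distinct cs"
    "set cs \<inter> set (f (replicate k [])) = {}"
    by (rule obtain_fresh_distinct_list[OF assms(1) finite_set])
  have template: "f xs = concat (map (instantiate cs xs) (f (map (\<lambda>c. [c]) cs)))"
    if "length xs = k" for xs
    using RCP_template[OF assms(1,3) that cs] .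
  obtain n w p i where range: "\<forall>j\<in>{1..n}. i j \<in> {1..k}"
    and normal_form: "\<And>xs. length xs = k \<Longrightarrow>
          concat (map (instantiate cs xs) (f (map (\<lambda>c. [c]) cs)))
            = w 0 @ concat (map (\<lambda>j. wpow (xs ! (i j - 1)) (p j) @ w j) [1..<n+1])"
    using concat_map_instantiate_normal_form[OF cs(2,1) assms(2)] by blast
  show ?thesis
  proof (intro exI conjI allI impI)
    fix xs :: "'a list list" assume "length xs = k"
    then show "f xs = w 0 @ concat (map (\<lambda>j. wpow (xs ! (i j - 1)) (p j) @ w j) [1..<n+1])"
      unfolding template[OF \<open>length xs = k\<close>] by (rule normal_form)
  qed (rule range)
qed

end
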